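(* Let $\Phi$ be the set of formulas of $NOM$ and let $[\![\cdot]\!]:\Phi\to\mathcal Q$ be an interpretation into an orthomodular lattice $\mathcal Q$. If for all formulas $\phi,\psi$ we have $[\![\phi\wedge\psi]\!]=[\![\phi]\!]\wedge[\![\psi]\!]$, $[\![\phi\rightarrow\psi]\!]=[\![\phi]\!]\rightarrow[\![\psi]\!]$, and $[\![\neg\phi]\!]=\neg[\![\phi]\!]$, then all the rules of inference of $NOM$ are sound in this interpretation.
   Context: The propositional deductive system $NOM$: formulas are built from propositional letters using $\wedge$, $\rightarrow$, $\neg$. Sequents are $\phi_1,\ldots,\phi_n\vdash\psi$ ($n\ge0$) with antecedent a finite ordered sequence. With $\Gamma$ a finite possibly empty sequence of formulas and $\phi,\psi,\chi$ formulas, the rules of $NOM$ are: (assumption) $\Gamma,\phi\vdash\phi$; (cut) $\Gamma\vdash\phi$, $\Gamma,\phi\vdash\psi$ $\Rightarrow$ $\Gamma\vdash\psi$; (paste) $\Gamma\vdash\phi$, $\Gamma\vdash\psi$ $\Rightarrow$ $\Gamma,\phi\vdash\psi$; (compatible exchange) $\Gamma,\phi,\psi\vdash\phi$, $\Gamma,\phi,\psi\vdash\chi$, $\Gamma,\psi,\phi\vdash\psi$ $\Rightarrow$ $\Gamma,\psi,\phi\vdash\chi$; ($\wedge$-intro) $\Gamma\vdash\phi$, $\Gamma\vdash\psi$ $\Rightarrow$ $\Gamma\vdash\phi\wedge\psi$; ($\wedge$-elim) $\Gamma\vdash\phi\wedge\psi$ $\Rightarrow$ $\Gamma\vdash\phi$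 and $\Rightarrow$ $\Gamma\vdash\psi$; ($\rightarrow$-intro) $\Gamma,\phi\vdash\psi$ $\Rightarrow$ $\Gamma\vdash\phi\rightarrow\psi$; ($\rightarrow$-elim) $\Gamma\vdash\phi\rightarrow\psi$ $\Rightarrow$ $\Gamma,\phi\vdash\psi$; (excluded middle) $\Gamma,\phi\vdash\psi$, $\Gamma,\neg\phi\vdash\psi$ $\Rightarrow$ $\Gamma\vdash\psi$; (explosion) $\Gamma\vdash\neg\phi$ $\Rightarrow$ $\Gamma,\phi\vdash\psi$. An orthomodular lattice is a bounded lattice with an order-reversing involution $\neg$ satisfying $a\wedge\neg a=\bot$, $a\vee\neg a=\top$, and $a\le b\Rightarrow a\vee(\neg a\wedge b)=b$. In it, $a\mathbin{\&}b=(a\vee\neg b)\wedge b$ and $a\rightarrow b=\neg a\vee(a\wedge b)$; $\&$ associates to the left and $a_1\mathbin{\&}\cdots\mathbin{\&}a_n=\top$ when $n=0$. An interpretation is any function $[\![\cdot]\!]:\Phi\to\mathcal Q$ into an orthomodular lattice. A sequent $\phi_1,\ldots,\phi_n\vdash\psi$ is true in it if $[\![\phi_1]\!]\mathbin{\&}\cdots\mathbin{\&}[\![\phi_n]\!]\le[\![\psi]\!]$; a rule of inference is sound if, in every instance, its conclusion is true whenever all its premises are true. *)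

theory Defs
  imports Main
begin

datatype 'p form = Letter 'p | And "'p form" "'p form" | Imp "'p form" "'p form" | Neg "'p form"

definition orthomodular :: "('a::bounded_lattice \<Rightarrow> 'a) \<Rightarrow> bool" where
  "orthomodular neg \<longleftrightarrow>
     (\<forall>a b. a \<le> b \<longrightarrow> neg b \<le> neg a) \<and>
     (\<forall>a. neg (neg a) = a) \<and>
     (\<forall>a. inf a (neg a) = bot) \<and>
     (\<forall>a. sup a (neg a) = top) \<and>
     (\<forall>a b. a \<le> b \<longrightarrow> sup a (inf (neg a) b) = b)"

definition sand :: "('a::bounded_lattice \<Rightarrow> 'a) \<Rightarrow> 'a \<Rightarrow> 'a \<Rightarrow> 'a" where
  "sand neg a b = inf (sup a (neg b)) b"

definition oimp :: "('a::bounded_lattice \<Rightarrow> 'a) \<Rightarrow> 'a \<Rightarrow> 'a \<Rightarrow> 'a" where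
  "oimp neg a b = sup (neg a) (inf a b)"

fun sands :: "('a::bounded_lattice \<Rightarrow> 'a) \<Rightarrow> 'a list \<Rightarrow> 'a" where
  "sands neg [] = top"
| "sands neg (x # xs) = foldl (sand neg) x xs"

definition seq_true :: "('a::bounded_lattice \<Rightarrow> 'a) \<Rightarrow> ('p form \<Rightarrow> 'a) \<Rightarrow> 'p form list \<Rightarrow> 'p form \<Rightarrow> bool" where
  "seq_true neg I \<Gamma> \<psi> \<longleftrightarrow> sands neg (map I \<Gamma>) \<le> I \<psi>"

end

theory Submission
  imports Defs
begin

(* Everything rests on the Sasaki projection s & a = (s \<squnion> \<not>a) \<sqinter> a, through
   which an antecedent is read from left to right.  It is left adjoint to the Sasaki hook
   (s & a \<le> b iff s \<le> a \<rightarrow> b), which gives both implication rules; it fixes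
   s when s \<le> a (cut and paste) and vanishes when s \<le> \<not>a (explosion).  The
   orthomodular law, in the form "a \<le> b and b \<sqinter> \<not>a = \<bottom> imply a = b", shows
   that s & a & b = s & (a \<sqinter> b) once s & a & b \<le> a (compatible exchange), and
   that s \<le> (s & a) \<squnion> (s & \<not>a) (excluded middle). *)

lemma sands_snoc: "sands neg (xs @ [y]) = sand neg (sands neg xs) y"
  by (cases xs) (auto simp: sand_def)

lemma sands_snoc_snoc: "sands neg (xs @ [y, z]) = sand neg (sand neg (sands neg xs) y) z"
  using sands_snoc[of neg "xs @ [y]" z] by (simp add: sands_snoc)

locale orthomodular_lattice =
  fixes neg :: "'a::bounded_lattice \<Rightarrow> 'a"
  assumes orthomodular: "orthomodular neg"
begin

lemma neg_neg [simp]: "neg (neg a) = a"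
  using orthomodular unfolding orthomodular_def by blast

lemma neg_antimono: "a \<le> b \<Longrightarrow> neg b \<le> neg a"
  using orthomodular unfolding orthomodular_def by blast

lemma neg_le_neg_iff [simp]: "neg a \<le> neg b \<longleftrightarrow> b \<le> a"
  using neg_antimono[of "neg a" "neg b"] neg_antimono[of b a] by auto

lemma inf_neg [simp]: "inf a (neg a) = bot"
  using orthomodular unfolding orthomodular_def by blast

lemma orthomodular_law: "a \<le> b \<Longrightarrow> sup a (inf (neg a) b) = b"
  using orthomodular unfolding orthomodular_def by blast

lemma neg_sup: "neg (sup a b) = inf (neg a) (neg b)"
proof (rule antisym)
  show "neg (sup a b) \<le> inf (neg a) (neg b)"
    by (simp add: neg_antimono)
  have "sup a b \<le> neg (inf (neg a) (neg b))"
    by (metis neg_le_neg_iff neg_neg inf.cobounded1 inf.cobounded2 le_sup_iff)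
  then show "inf (neg a) (neg b) \<le> neg (sup a b)"
    by (metis neg_le_neg_iff neg_neg)
qed

lemma neg_inf: "neg (inf a b) = sup (neg a) (neg b)"
  by (metis neg_sup neg_neg)

lemma inf_sup_neg_absorb:
  assumes "a \<le> b"
  shows "inf b (sup a (neg b)) = a"
proof -
  have "sup (neg b) (inf b (neg a)) = neg a"
    using orthomodular_law[of "neg b" "neg a"] assms by simp
  then have "neg (sup (neg b) (inf b (neg a))) = a"
    by simp
  then show ?thesis
    by (simp add: neg_sup neg_inf sup_commute)
qed

lemma orthomodular_eqI:
  assumes "a \<le> b" and "inf b (neg a) = bot"
  shows "a = b"
  using orthomodular_law[OF assms(1)] assms(2) by (simp add: inf_commute)

lemma sand_le_right: "sand neg s a \<le> a"
  by (simp add: sand_def)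

lemma le_sup_sand_neg: "s \<le> sup (sand neg s a) (neg a)"
proof -
  have "sup (neg a) (inf a (sup s (neg a))) = sup s (neg a)"
    using orthomodular_law[of "neg a" "sup s (neg a)"] by simp
  then show ?thesis
    by (metis sand_def inf_commute sup_commute sup.cobounded1)
qed

lemma sand_eq_left: "s \<le> a \<Longrightarrow> sand neg s a = s"
  by (simp add: sand_def inf_commute inf_sup_neg_absorb)

lemma sand_eq_bot: "s \<le> neg a \<Longrightarrow> sand neg s a = bot"
  by (simp add: sand_def sup_absorb2 inf_commute)

lemma sand_le_iff_le_oimp: "sand neg s a \<le> b \<longleftrightarrow> s \<le> oimp neg a b"
proof
  assume "sand neg s a \<le> b"
  then have "sand neg s a \<le> inf a b"
    by (simp add: sand_le_right)
  then have "sup (sand neg s a) (neg a) \<le> oimp neg a b"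
    by (simp add: oimp_def le_supI2)
  then show "s \<le> oimp neg a b"
    using le_sup_sand_neg order_trans by blast
next
  assume "s \<le> oimp neg a b"
  then have "sand neg s a \<le> inf (sup (inf a b) (neg a)) a"
    unfolding sand_def oimp_def by (simp add: le_infI1 sup_commute)
  also have "\<dots> = inf a b"
    using inf_sup_neg_absorb[of "inf a b" a] by (simp add: inf_commute)
  finally show "sand neg s a \<le> b"
    by simp
qed

lemma sand_sand_eq_sand_inf:
  assumes "sand neg (sand neg t a) b \<le> a"
  shows "sand neg (sand neg t a) b = sand neg t (inf a b)"
proof (rule antisym)
  let ?x = "sand neg (sand neg t a) b" and ?m = "inf a b"
  have x_le_m: "?x \<le> ?m"
    using assms sand_le_right by simp
  have "t \<le> sup (sand neg t a) (neg a)"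
    by (rule le_sup_sand_neg)
  also have "sand neg t a \<le> sup ?x (neg b)"
    by (rule le_sup_sand_neg)
  finally have "t \<le> sup (sup ?x (neg b)) (neg a)"
    by (simp add: le_supI1)
  then have "t \<le> sup ?x (neg ?m)"
    by (simp add: neg_inf sup_assoc sup_commute sup_left_commute)
  then have "sup t (neg ?m) \<le> sup ?x (neg ?m)"
    by simp
  then have "sand neg t ?m \<le> inf ?m (sup ?x (neg ?m))"
    unfolding sand_def by (subst inf_commute) (rule inf_mono[OF order_refl])
  also have "\<dots> = ?x"
    using inf_sup_neg_absorb[OF x_le_m] .
  finally show "sand neg t ?m \<le> ?x" .
  have "sand neg t a \<le> sup t (neg a)"
    by (simp add: sand_def)
  then have "?x \<le> sup (sup t (neg a)) (neg b)"
    unfolding sand_def[of neg "sand neg t a"] by (meson inf.coboundedI1 sup.mono order_refl)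
  then have "?x \<le> sup t (neg ?m)"
    by (simp add: neg_inf sup_assoc)
  with x_le_m show "?x \<le> sand neg t ?m"
    by (simp add: sand_def)
qed

lemma le_sup_sand_sand_neg: "s \<le> sup (sand neg s a) (sand neg s (neg a))"
proof -
  let ?p = "sand neg s a" and ?q = "sand neg s (neg a)"
  let ?z = "inf (sup ?p (neg a)) (sup ?q a)"
  have p_le: "?p \<le> a" and q_le: "?q \<le> neg a"
    using sand_le_right by auto
  have "inf ?z (neg ?p) \<le> inf (neg ?p) (sup (neg a) ?p)"
    by (simp add: le_infI1 sup_commute)
  also have "\<dots> = neg a"
    using inf_sup_neg_absorb[of "neg a" "neg ?p"] p_le by simp
  finally have z_p: "inf ?z (neg ?p) \<le> neg a" .
  have "inf ?z (neg ?q) \<le> inf (neg ?q) (sup a ?q)"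
    by (simp add: le_infI1 sup_commute)
  also have "\<dots> = a"
    using inf_sup_neg_absorb[of a "neg ?q"] q_le by (metis neg_le_neg_iff neg_neg)
  finally have z_q: "inf ?z (neg ?q) \<le> a" .
  have "inf ?z (neg (sup ?p ?q)) = inf (inf ?z (neg ?p)) (inf ?z (neg ?q))"
    by (simp add: neg_sup inf_assoc inf_commute inf_left_commute)
  also have "\<dots> \<le> inf (neg a) a"
    using z_p z_q by (rule inf_mono)
  finally have "inf ?z (neg (sup ?p ?q)) = bot"
    by (simp add: inf_commute bot_unique)
  moreover have "sup ?p ?q \<le> ?z"
    using p_le q_le by (simp add: le_supI1 le_supI2)
  ultimately have "sup ?p ?q = ?z"
    by (simp add: orthomodular_eqI)
  moreover have "s \<le> ?z"
    using le_sup_sand_neg[of s a] le_sup_sand_neg[of s "neg a"] by simp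
  ultimately show ?thesis
    by simp
qed

end

theorem theorem3p5:
  fixes neg :: "'a::bounded_lattice \<Rightarrow> 'a" and I :: "'p form \<Rightarrow> 'a"
  assumes oml: "orthomodular neg"
    and hand: "\<And>\<phi> \<psi>. I (And \<phi> \<psi>) = inf (I \<phi>) (I \<psi>)"
    and himp: "\<And>\<phi> \<psi>. I (Imp \<phi> \<psi>) = oimp neg (I \<phi>) (I \<psi>)"
    and hneg: "\<And>\<phi>. I (Neg \<phi>) = neg (I \<phi>)"
  shows
    \<comment> \<open>assumption\<close>
    "(\<forall>\<Gamma> \<phi>. seq_true neg I (\<Gamma> @ [\<phi>]) \<phi>) \<and>
     \<comment> \<open>cut\<close>
     (\<forall>\<Gamma> \<phi> \<psi>. seq_true neg I \<Gamma> \<phi> \<longrightarrow> seq_true neg I (\<Gamma> @ [\<phi>]) \<psi> \<longrightarrow> seq_true neg I \<Gamma> \<psi>) \<and>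
     \<comment> \<open>paste\<close>
     (\<forall>\<Gamma> \<phi> \<psi>. seq_true neg I \<Gamma> \<phi> \<longrightarrow> seq_true neg I \<Gamma> \<psi> \<longrightarrow> seq_true neg I (\<Gamma> @ [\<phi>]) \<psi>) \<and>
     \<comment> \<open>compatible exchange\<close>
     (\<forall>\<Gamma> \<phi> \<psi> \<chi>. seq_true neg I (\<Gamma> @ [\<phi>, \<psi>]) \<phi> \<longrightarrow> seq_true neg I (\<Gamma> @ [\<phi>, \<psi>]) \<chi> \<longrightarrow>
        seq_true neg I (\<Gamma> @ [\<psi>, \<phi>]) \<psi> \<longrightarrow> seq_true neg I (\<Gamma> @ [\<psi>, \<phi>]) \<chi>) \<and>
     \<comment> \<open>and-intro\<close>
     (\<forall>\<Gamma> \<phi> \<psi>. seq_true neg I \<Gamma> \<phi> \<longrightarrow> seq_true neg I \<Gamma> \<psi> \<longrightarrow> seq_true neg I \<Gamma> (And \<phi> \<psi>)) \<and>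
     \<comment> \<open>and-elim (both)\<close>
     (\<forall>\<Gamma> \<phi> \<psi>. seq_true neg I \<Gamma> (And \<phi> \<psi>) \<longrightarrow> seq_true neg I \<Gamma> \<phi>) \<and>
     (\<forall>\<Gamma> \<phi> \<psi>. seq_true neg I \<Gamma> (And \<phi> \<psi>) \<longrightarrow> seq_true neg I \<Gamma> \<psi>) \<and>
     \<comment> \<open>imp-intro\<close>
     (\<forall>\<Gamma> \<phi> \<psi>. seq_true neg I (\<Gamma> @ [\<phi>]) \<psi> \<longrightarrow> seq_true neg I \<Gamma> (Imp \<phi> \<psi>)) \<and>
     \<comment> \<open>imp-elim\<close>
     (\<forall>\<Gamma> \<phi> \<psi>. seq_true neg I \<Gamma> (Imp \<phi> \<psi>) \<longrightarrow> seq_true neg I (\<Gamma> @ [\<phi>]) \<psi>) \<and>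
     \<comment> \<open>excluded middle\<close>
     (\<forall>\<Gamma> \<phi> \<psi>. seq_true neg I (\<Gamma> @ [\<phi>]) \<psi> \<longrightarrow> seq_true neg I (\<Gamma> @ [Neg \<phi>]) \<psi> \<longrightarrow> seq_true neg I \<Gamma> \<psi>) \<and>
     \<comment> \<open>explosion\<close>
     (\<forall>\<Gamma> \<phi> \<psi>. seq_true neg I \<Gamma> (Neg \<phi>) \<longrightarrow> seq_true neg I (\<Gamma> @ [\<phi>]) \<psi>)"
proof -
  interpret orthomodular_lattice neg
    by (fact orthomodular_lattice.intro[OF oml])
  have assumption: "seq_true neg I (\<Gamma> @ [\<phi>]) \<phi>" for \<Gamma> \<phi>
    by (simp add: seq_true_def sands_snoc sand_le_right)
  have cut_paste: "seq_true neg I (\<Gamma> @ [\<phi>]) \<psi> \<longleftrightarrow> seq_true neg I \<Gamma> \<psi>"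
    if "seq_true neg I \<Gamma> \<phi>" for \<Gamma> \<phi> \<psi>
    using that by (simp add: seq_true_def sands_snoc sand_eq_left)
  have exchange: "seq_true neg I (\<Gamma> @ [\<psi>, \<phi>]) \<chi>"
    if "seq_true neg I (\<Gamma> @ [\<phi>, \<psi>]) \<phi>" "seq_true neg I (\<Gamma> @ [\<phi>, \<psi>]) \<chi>"
      "seq_true neg I (\<Gamma> @ [\<psi>, \<phi>]) \<psi>" for \<Gamma> \<phi> \<psi> \<chi>
    using that sand_sand_eq_sand_inf[of "sands neg (map I \<Gamma>)" "I \<phi>" "I \<psi>"]
      sand_sand_eq_sand_inf[of "sands neg (map I \<Gamma>)" "I \<psi>" "I \<phi>"]
    by (simp add: seq_true_def sands_snoc_snoc inf_commute)
  have and_rules: "seq_true neg I \<Gamma> (And \<phi> \<psi>) \<longleftrightarrow> seq_true neg I \<Gamma> \<phi> \<and> seq_true neg I \<Gamma> \<psi>"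
    for \<Gamma> \<phi> \<psi>
    by (simp add: seq_true_def hand)
  have imp_rules: "seq_true neg I \<Gamma> (Imp \<phi> \<psi>) \<longleftrightarrow> seq_true neg I (\<Gamma> @ [\<phi>]) \<psi>"
    for \<Gamma> \<phi> \<psi>
    by (simp add: seq_true_def sands_snoc himp sand_le_iff_le_oimp)
  have excluded_middle: "seq_true neg I \<Gamma> \<psi>"
    if "seq_true neg I (\<Gamma> @ [\<phi>]) \<psi>" "seq_true neg I (\<Gamma> @ [Neg \<phi>]) \<psi>" for \<Gamma> \<phi> \<psi>
    using that le_sup_sand_sand_neg[of "sands neg (map I \<Gamma>)" "I \<phi>"]
    by (simp add: seq_true_def sands_snoc hneg) (meson le_sup_iff order_trans)
  have explosion: "seq_true neg I (\<Gamma> @ [\<phi>]) \<psi>" if "seq_true neg I \<Gamma> (Neg \<phi>)" for \<Gamma> \<phi> \<psi>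
    using that by (simp add: seq_true_def sands_snoc hneg sand_eq_bot)
  show ?thesis
    by (simp add: assumption cut_paste and_rules imp_rules explosion)
      (blast intro: exchange excluded_middle)
qed

end
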